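(* There exist absolute constants $C_0,C_1>0$ such that for every $c=-2-t$ with $0<t<1$ the following hold: (a) $|r_n(c)|\le 2+C_0\,4^{n-1}t$ for all $1\le n\le k(c)$; (b) $t\le C_1 4^{-k(c)}$.
   Context: For real $c$ let $r_n(c)=f_c^{\circ n}(0)$ where $f_c(z)=z^2+c$; thus $r_1(c)=c$ and $r_{n+1}(c)=r_n(c)^2+c$. For $-3<c<-2$, $k(c)$ denotes the smallest positive integer $k$ such that $r_{k+1}(c)/r_k(c)\ge 36$. *)

theory Defs
  imports Complex_Main
begin

primrec r :: "nat \<Rightarrow> real \<Rightarrow> real" where
  "r 0 c = 0"
| "r (Suc n) c = (r n c)^2 + c"

definition kc :: "real \<Rightarrow> nat" where
  "kc c = (LEAST k. 0 < k \<and> r (k+1) c / r k c \<ge> 36)"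

end

theory Submission
  imports Defs
begin

text \<open>Write \<open>e n = r n (-2-t) - 2\<close>. Then \<open>e 2 = 3t + t^2\<close> and
  \<open>e (n+1) = 4 e n + (e n)^2 - t\<close>, so \<open>e n\<close> grows at least like \<open>4^(n-2) t\<close> and, as
  long as it stays bounded, at most like a constant times \<open>4^(n-1) t\<close>. Before the escape
  time \<open>k(c)\<close> the orbit stays below 37 (otherwise the ratio \<open>r (n+1) / r n\<close> would already
  be at least 36), so \<open>e n\<close> is bounded by an absolute constant for \<open>n \<le> k(c)\<close>. The upper
  growth estimate then gives (a), and the lower one at \<open>n = k(c)\<close> gives (b).\<close>

lemma r_Suc_sub_two:
  "r (Suc n) (-2-t) - 2 = 4 * (r n (-2-t) - 2) + (r n (-2-t) - 2)^2 - t"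
  by (simp add: power2_eq_square algebra_simps)

lemma r_two_sub_two: "r 2 (-2-t) - 2 = 3*t + t^2"
  by (simp add: numeral_2_eq_2 power2_eq_square algebra_simps)

lemma r_sub_two_lower_bound:
  fixes t :: real
  assumes "0 \<le> t" and "2 \<le> n"
  shows "4^(n-2) * t + t/3 \<le> r n (-2-t) - 2"
  using assms(2)
proof (induction n rule: nat_induct_at_least)
  case base
  show ?case using assms(1) by (simp add: r_two_sub_two)
next
  case (Suc n)
  have "Suc n - 2 = Suc (n - 2)" using Suc.hyps by simp
  hence "4^(Suc n - 2) * t + t/3 = 4 * (4^(n-2) * t + t/3) - t"
    by (simp add: algebra_simps)
  also have "\<dots> \<le> 4 * (r n (-2-t) - 2) + (r n (-2-t) - 2)^2 - t"
    using mult_left_mono[OF Suc.IH, of 4] zero_le_power2[of "r n (-2-t) - 2"] by linarith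
  finally show ?case by (simp only: r_Suc_sub_two)
qed

lemma r_sub_two_ge:
  fixes t :: real
  assumes "0 \<le> t" and "2 \<le> n"
  shows "t \<le> r n (-2-t) - 2"
proof -
  have "t \<le> 4^(n-2) * t"
    using mult_right_mono[OF one_le_power[of "4::real" "n-2"] assms(1)] by simp
  thus ?thesis using r_sub_two_lower_bound[OF assms] assms(1) by linarith
qed

text \<open>The factor \<open>exp (e n / 8)\<close> dominates \<open>\<Prod>j<n. 1 + e j / 4\<close>: since
  \<open>e (j+1) \<ge> 3 e j\<close>, the exponents \<open>e j / 4\<close> sum to at most \<open>e n / 8\<close>.\<close>

lemma r_sub_two_upper_bound:
  fixes t :: real
  assumes t0: "0 \<le> t" and t1: "t \<le> 1" and "2 \<le> n"
  shows "r n (-2-t) - 2 \<le> 4^(n-1) * t * exp ((r n (-2-t) - 2) / 8)"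
  using assms(3)
proof (induction n rule: nat_induct_at_least)
  case base
  have "3*t + t^2 \<le> 4*t"
    using mult_right_mono[OF t1 t0] by (simp add: power2_eq_square)
  also have "\<dots> \<le> 4*t * exp ((3*t + t^2) / 8)"
    using mult_left_mono[of 1 "exp ((3*t + t^2) / 8)" "4*t"] t0 by simp
  finally show ?case by (simp add: r_two_sub_two)
next
  case (Suc n)
  define x where "x = r n (-2-t) - 2"
  define y where "y = r (Suc n) (-2-t) - 2"
  have y: "y = 4*x + x^2 - t"
    unfolding x_def y_def by (rule r_Suc_sub_two)
  have "t \<le> x"
    using r_sub_two_ge[OF t0 Suc.hyps(1)] unfolding x_def .
  hence x0: "0 \<le> x" and "3*x \<le> y"
    using t0 y zero_le_power2[of x] by linarith+
  have "y \<le> 4*x * (1 + x/4)"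
    using y t0 by (simp add: power2_eq_square algebra_simps)
  also have "\<dots> \<le> 4*x * exp (x/4)"
    using exp_ge_add_one_self[of "x/4"] x0 by (intro mult_left_mono) (auto simp: add.commute)
  also have "\<dots> \<le> 4 * (4^(n-1) * t * exp (x/8)) * exp (x/4)"
    using Suc.IH unfolding x_def[symmetric] by (intro mult_right_mono) auto
  also have "\<dots> = (4 * 4^(n-1)) * t * (exp (x/8) * exp (x/4))"
    by (simp add: mult_ac)
  also have "\<dots> = 4^(Suc n - 1) * t * exp (3*x/8)"
  proof -
    have "4 * 4^(n-1) = (4::real)^(Suc n - 1)" using Suc.hyps by (cases n) auto
    moreover have "exp (x/8) * exp (x/4) = exp (3*x/8)" by (simp flip: exp_add)
    ultimately show ?thesis by simp
  qed
  also have "\<dots> \<le> 4^(Suc n - 1) * t * exp (y/8)"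
    using \<open>3*x \<le> y\<close> t0 by (intro mult_left_mono) auto
  finally show ?case unfolding y_def .
qed

lemma ratio_ge_36_if_ge_37:
  fixes x c :: real
  assumes "37 \<le> x" and "-3 \<le> c"
  shows "36 \<le> (x^2 + c) / x"
proof -
  have "37 * x \<le> x^2"
    using mult_right_mono[OF assms(1), of x] assms(1) by (simp add: power2_eq_square)
  hence "36 * x \<le> x^2 + c" using assms by linarith
  thus ?thesis using assms(1) by (simp add: pos_le_divide_eq)
qed

lemma kc_spec:
  fixes t :: real
  assumes "0 < t" and "t < 1"
  shows "0 < kc (-2-t)" and "36 \<le> r (kc (-2-t) + 1) (-2-t) / r (kc (-2-t)) (-2-t)"
proof -
  obtain m :: nat where "40 / t < 4^m"
    using real_arch_pow[of 4 "40/t"] by auto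
  hence "40 < 4^m * t" using assms(1) by (simp add: divide_less_eq)
  hence big: "37 \<le> r (m+2) (-2-t)"
    using r_sub_two_lower_bound[of t "m+2"] assms(1) by simp
  have "36 \<le> r (m+2+1) (-2-t) / r (m+2) (-2-t)"
    using ratio_ge_36_if_ge_37[OF big, of "-2-t"] assms(2) by simp
  hence "\<exists>k. 0 < k \<and> 36 \<le> r (k+1) (-2-t) / r k (-2-t)"
    by (intro exI[of _ "m+2"]) simp
  from LeastI_ex[OF this]
  show "0 < kc (-2-t)" and "36 \<le> r (kc (-2-t) + 1) (-2-t) / r (kc (-2-t)) (-2-t)"
    unfolding kc_def by auto
qed

lemma two_le_kc:
  fixes t :: real
  assumes "0 < t" and "t < 1"
  shows "2 \<le> kc (-2-t)"
proof (rule ccontr)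
  assume "\<not> 2 \<le> kc (-2-t)"
  hence "kc (-2-t) = 1" using kc_spec(1)[OF assms] by simp
  hence "36 \<le> ((-2-t)^2 + (-2-t)) / (-2-t)"
    using kc_spec(2)[OF assms] by simp
  moreover have "(-2-t)^2 + (-2-t) = (1+t) * (2+t)"
    by (simp add: power2_eq_square algebra_simps)
  hence "0 < (-2-t)^2 + (-2-t)" using assms(1) by simp
  ultimately show False
    using divide_pos_neg[of "(-2-t)^2 + (-2-t)" "-2-t"] assms(1) by linarith
qed

lemma abs_r_lt_37_before_kc:
  fixes t :: real
  assumes "0 < t" and "t < 1" and "1 \<le> n" and "n < kc (-2-t)"
  shows "\<bar>r n (-2-t)\<bar> < 37"
proof (cases "n = 1")
  case True
  thus ?thesis using assms(1,2) by simp
next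
  case False
  have "\<not> 36 \<le> r (n+1) (-2-t) / r n (-2-t)"
    using not_less_Least[OF assms(4)[unfolded kc_def]] assms(3) by simp
  hence "r n (-2-t) < 37"
    using ratio_ge_36_if_ge_37[of "r n (-2-t)" "-2-t"] assms(2) by force
  moreover have "0 < r n (-2-t)"
    using r_sub_two_ge[of t n] False assms(1,3) by simp
  ultimately show ?thesis by simp
qed

lemma r_le_37_squared_up_to_kc:
  fixes t :: real
  assumes "0 < t" and "t < 1" and "2 \<le> n" and "n \<le> kc (-2-t)"
  shows "r n (-2-t) \<le> 37^2"
proof -
  obtain m where n: "n = Suc m" and "1 \<le> m"
    using assms(3) by (cases n) auto
  hence "\<bar>r m (-2-t)\<bar> < 37"
    using abs_r_lt_37_before_kc[OF assms(1,2)] assms(4) by simp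
  hence "(r m (-2-t))^2 \<le> 37^2"
    using power_mono[of "\<bar>r m (-2-t)\<bar>" 37 2] by simp
  thus ?thesis using n assms(1) by simp
qed

lemma abs_r_le_up_to_kc:
  fixes t :: real
  assumes t0: "0 < t" and t1: "t < 1" and "1 \<le> n" and "n \<le> kc (-2-t)"
  shows "\<bar>r n (-2-t)\<bar> \<le> 2 + exp (37^2/8) * 4^(n-1) * t"
proof (cases "n = 1")
  case True
  have "t \<le> exp (37^2/8) * t"
    using mult_right_mono[of 1 "exp (37^2/8)" t] t0 by simp
  thus ?thesis using True t0 t1 by simp
next
  case False
  hence n2: "2 \<le> n" using assms(3) by simp
  define x where "x = r n (-2-t) - 2"
  have "0 \<le> x" and "x \<le> 37^2"
    using r_sub_two_ge[of t n] r_le_37_squared_up_to_kc[OF t0 t1 n2 assms(4)] t0 n2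
    unfolding x_def by simp_all
  have "x \<le> 4^(n-1) * t * exp (x/8)"
    using r_sub_two_upper_bound[of t n] t0 t1 n2 unfolding x_def by simp
  also have "\<dots> \<le> 4^(n-1) * t * exp (37^2/8)"
    using \<open>x \<le> 37^2\<close> t0 by (intro mult_left_mono) auto
  finally show ?thesis
    using \<open>0 \<le> x\<close> unfolding x_def by (simp add: mult_ac)
qed

lemma t_le_quarter_power_kc:
  fixes t :: real
  assumes t0: "0 < t" and t1: "t < 1"
  shows "t \<le> 16 * 37^2 * (1/4) ^ kc (-2-t)"
proof -
  define k where "k = kc (-2-t)"
  have k2: "2 \<le> k" using two_le_kc[OF assms] unfolding k_def .
  have "4^(k-2) * t \<le> 37^2"
    using r_sub_two_lower_bound[of t k] r_le_37_squared_up_to_kc[OF t0 t1 k2] t0 k2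
    unfolding k_def by simp
  moreover have "(4::real)^k = 4^2 * 4^(k-2)"
    using k2 by (simp only: power_add[symmetric] le_add_diff_inverse)
  ultimately have "4^k * t \<le> 16 * 37^2" by (simp add: mult_ac)
  thus ?thesis unfolding k_def[symmetric] by (simp add: power_one_over field_simps)
qed

theorem mainTheorem6:
  shows "\<exists>C0 C1 :: real. C0 > 0 \<and> C1 > 0 \<and>
    (\<forall>t :: real. 0 < t \<and> t < 1 \<longrightarrow>
       (\<forall>n. 1 \<le> n \<and> n \<le> kc (-2 - t) \<longrightarrow>
            \<bar>r n (-2 - t)\<bar> \<le> 2 + C0 * 4 ^ (n - 1) * t) \<and>
       t \<le> C1 * (1 / 4) ^ kc (-2 - t))"
  using abs_r_le_up_to_kc t_le_quarter_power_kc
  by (intro exI[of _ "exp (37^2/8)"] exI[of _ "16 * 37^2"]) auto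

end
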